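(* Let $\mathcal X,\mathcal U$ be finite nonempty sets, $f:\mathcal X\times\mathcal U\to\mathcal X$, $\ell,g:\mathcal X\to\mathbb R$ and $\gamma\in(0,1)$. For a stochastic policy $\pi:\mathcal X\to\Delta(\mathcal U)$ let $\tilde V^{\gamma,\pi}_{\mathrm{RA}}:\mathcal X\to\mathbb R$ be the unique solution of $$\tilde V^{\gamma,\pi}_{\mathrm{RA}}(x)=(1-\gamma)\min\{\ell(x),g(x)\}+\gamma\,\mathbb E_{u\sim\pi(x)}\Big[\min\big\{\max\{\tilde V^{\gamma,\pi}_{\mathrm{RA}}(f(x,u)),\ell(x)\},g(x)\big\}\Big],$$ and let $V^{\gamma,*}_{\mathrm{RA}}:\mathcal X\to\mathbb R$ be the unique solution of $$V^{\gamma,*}_{\mathrm{RA}}(x)=(1-\gamma)\min\{\ell(x),g(x)\}+\gamma\min\Big\{\max\big\{\max_{u\in\mathcal U}V^{\gamma,*}_{\mathrm{RA}}(f(x,u)),\ell(x)\big\},g(x)\Big\}.$$ Then $\tilde V^{\gamma,\pi}_{\mathrm{RA}}\le V^{\gamma,*}_{\mathrm{RA}}$ pointwise for every stochastic policy $\pi$, and there exists a stochastic policy $\pi^*:\mathcal X\to\Delta(\mathcal U)$ with $\tilde V^{\gamma,\pi^*}_{\mathrm{RA}}=V^{\gamma,*}_{\mathrm{RA}}$.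
   Context: $\Delta(\mathcal U)$ denotes the set of probability distributions on $\mathcal U$. Both fixed-point equations are defined by $\gamma$-contractive operators on real functions on $\mathcal X$, so their solutions exist and are unique. *)

theory Defs
  imports "HOL-Probability.Probability"
begin

definition RA_policy_value ::
  "('x \<Rightarrow> 'u \<Rightarrow> 'x) \<Rightarrow> ('x \<Rightarrow> real) \<Rightarrow> ('x \<Rightarrow> real) \<Rightarrow> real \<Rightarrow> ('x \<Rightarrow> 'u pmf) \<Rightarrow> 'x \<Rightarrow> real" where
  "RA_policy_value f l g \<gamma> \<pi> = (THE V. \<forall>x. V x =
      (1 - \<gamma>) * min (l x) (g x)
      + \<gamma> * measure_pmf.expectation (\<pi> x) (\<lambda>u. min (max (V (f x u)) (l x)) (g x)))"

definition RA_opt_value ::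
  "('x \<Rightarrow> 'u::finite \<Rightarrow> 'x) \<Rightarrow> ('x \<Rightarrow> real) \<Rightarrow> ('x \<Rightarrow> real) \<Rightarrow> real \<Rightarrow> 'x \<Rightarrow> real" where
  "RA_opt_value f l g \<gamma> = (THE V. \<forall>x. V x =
      (1 - \<gamma>) * min (l x) (g x)
      + \<gamma> * min (max (Max (range (\<lambda>u. V (f x u)))) (l x)) (g x))"

end

theory Submission
  imports Defs
begin

text \<open>Both Bellman operators are monotone and satisfy \<open>T (v + M) \<le> T v + \<gamma> M\<close> for constants
  \<open>M \<ge> 0\<close>, since clipping between \<open>\<ell>\<close> and \<open>g\<close> is monotone and 1-Lipschitz. Such operators are
  \<open>\<gamma>\<close>-contractions in the sup norm, so their fixed points exist and are unique, and every
  subsolution \<open>v \<le> T v\<close> lies below the fixed point. The policy operator is dominated by the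
  optimal one, because an average is at most a maximum; hence every policy value is a subsolution
  of the optimal equation. Conversely, the deterministic policy choosing a maximising action for
  the optimal value makes the two operators agree at that value, so it attains it.\<close>

lemma Max_range_attained:
  fixes h :: "'a::finite \<Rightarrow> 'b::linorder"
  obtains a where "h a = Max (range h)"
  using Max_in[of "range h"] by fastforce

lemma The_eq_iff:
  assumes "\<exists>!x. P x"
  shows "(THE x. P x) = y \<longleftrightarrow> P y"
  using assms by (auto intro: the1_equality theI')

lemma min_max_le_shift:
  fixes a b c d M :: real
  shows "0 \<le> M \<Longrightarrow> a \<le> b + M \<Longrightarrow> min (max a c) d \<le> min (max b c) d + M"
  by linarith

lemma integrable_min_max_pmf:
  "integrable (measure_pmf p) (\<lambda>u. min (max (h u) a) (b :: real))"
  by (rule measure_pmf.integrable_const_bound[where B = "\<bar>a\<bar> + \<bar>b\<bar>"]) auto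

text \<open>Blackwell's sufficient conditions, monotonicity and discounting, merged into one clause.\<close>
definition blackwell_contraction :: "real \<Rightarrow> (('x \<Rightarrow> real) \<Rightarrow> ('x \<Rightarrow> real)) \<Rightarrow> bool" where
  "blackwell_contraction c T \<longleftrightarrow>
     (\<forall>v w M. 0 \<le> M \<longrightarrow> (\<forall>y. v y \<le> w y + M) \<longrightarrow> (\<forall>x. T v x \<le> T w x + c * M))"

lemma blackwell_contractionD:
  "blackwell_contraction c T \<Longrightarrow> 0 \<le> M \<Longrightarrow> (\<And>y. v y \<le> w y + M) \<Longrightarrow> T v x \<le> T w x + c * M"
  unfolding blackwell_contraction_def by blast

lemma blackwell_contraction_dist:
  assumes "blackwell_contraction c T" "0 \<le> M" "\<And>y. dist (v y) (w y) \<le> M"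
  shows "dist (T v x) (T w x) \<le> c * M"
proof -
  have "v y \<le> w y + M" "w y \<le> v y + M" for y
    using assms(3)[of y] by (auto simp: dist_real_def abs_le_iff)
  then have "T v x \<le> T w x + c * M" "T w x \<le> T v x + c * M"
    using blackwell_contractionD[OF assms(1,2)] by blast+
  then show ?thesis by (simp add: dist_real_def abs_le_iff)
qed

lemma blackwell_contraction_has_fixpoint:
  fixes T :: "('x::finite \<Rightarrow> real) \<Rightarrow> ('x \<Rightarrow> real)"
  assumes "c < 1" and T: "blackwell_contraction c T"
  obtains V where "T V = V"
proof -
  \<comment> \<open>Banach's theorem for the sup metric; on a finite index type every function is bounded.\<close>
  let ?D = "Met_TC.fdist UNIV :: ('x \<Rightarrow> real) \<Rightarrow> _"
  interpret F: Metric_space UNIV ?D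
    using Met_TC.Metric_space_funspace[of "UNIV :: 'x set"]
    by (simp add: Met_TC.fspace_def finite_imp_bounded)
  have "F.mcomplete"
    using Met_TC.mcomplete_funspace[where 'a = real, of "UNIV :: 'x set"]
    by (simp add: mcomplete_of_def Met_TC.fspace_def finite_imp_bounded complete_UNIV)
  moreover have "?D (T v) (T w) \<le> c * ?D v w" for v w
  proof -
    have "dist (v y) (w y) \<le> ?D v w" for y
      using Met_TC.funspace_mdist_le[of v UNIV w "?D v w"]
      by (simp add: Met_TC.fspace_def finite_imp_bounded)
    then have "dist (T v x) (T w x) \<le> c * ?D v w" for x
      by (intro blackwell_contraction_dist[OF T] F.nonneg)
    then show ?thesis
      using Met_TC.funspace_mdist_le[of "T v" UNIV "T w" "c * ?D v w"]
      by (simp add: Met_TC.fspace_def finite_imp_bounded)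
  qed
  ultimately obtain V where "T V = V"
    using F.Banach_fixedpoint_thm[of T c] \<open>c < 1\<close> by auto
  then show thesis ..
qed

lemma blackwell_contraction_le_fixpoint:
  fixes T :: "('x::finite \<Rightarrow> real) \<Rightarrow> ('x \<Rightarrow> real)"
  assumes "c < 1" and T: "blackwell_contraction c T"
    and sub: "\<And>y. v y \<le> T v y" and fixed: "T w = w"
  shows "v x \<le> w x"
proof (rule ccontr)
  assume "\<not> v x \<le> w x"
  obtain z where z: "v z - w z = Max (range (\<lambda>y. v y - w y))"
    by (rule Max_range_attained)
  define M where "M = v z - w z"
  have vw: "v y \<le> w y + M" for y
  proof -
    have "v y - w y \<le> Max (range (\<lambda>y. v y - w y))" by (rule Max_ge) auto
    then show ?thesis unfolding M_def z by linarith
  qed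
  have "M > 0"
    using vw[of x] \<open>\<not> v x \<le> w x\<close> by linarith
  have "v z \<le> T v z" by (rule sub)
  also have "\<dots> \<le> T w z + c * M"
    using \<open>M > 0\<close> vw by (intro blackwell_contractionD[OF T]) auto
  also have "\<dots> < w z + M"
    using fixed \<open>M > 0\<close> \<open>c < 1\<close> by simp
  finally show False
    unfolding M_def by simp
qed

lemma blackwell_contraction_ex1_fixpoint:
  fixes T :: "('x::finite \<Rightarrow> real) \<Rightarrow> ('x \<Rightarrow> real)"
  assumes "c < 1" and "blackwell_contraction c T"
  shows "\<exists>!V. T V = V"
proof -
  obtain V where "T V = V"
    using blackwell_contraction_has_fixpoint[OF assms] .
  moreover have "W = V" if "T W = W" for W
    using blackwell_contraction_le_fixpoint[OF assms] \<open>T V = V\<close> that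
    by (intro ext antisym) (auto simp: fun_eq_iff)
  ultimately show ?thesis by blast
qed

definition RA_policy_operator ::
  "('x \<Rightarrow> 'u \<Rightarrow> 'x) \<Rightarrow> ('x \<Rightarrow> real) \<Rightarrow> ('x \<Rightarrow> real) \<Rightarrow> real \<Rightarrow> ('x \<Rightarrow> 'u pmf)
     \<Rightarrow> ('x \<Rightarrow> real) \<Rightarrow> 'x \<Rightarrow> real" where
  "RA_policy_operator f l g \<gamma> \<pi> V x = (1 - \<gamma>) * min (l x) (g x)
      + \<gamma> * measure_pmf.expectation (\<pi> x) (\<lambda>u. min (max (V (f x u)) (l x)) (g x))"

definition RA_opt_operator ::
  "('x \<Rightarrow> 'u::finite \<Rightarrow> 'x) \<Rightarrow> ('x \<Rightarrow> real) \<Rightarrow> ('x \<Rightarrow> real) \<Rightarrow> real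
     \<Rightarrow> ('x \<Rightarrow> real) \<Rightarrow> 'x \<Rightarrow> real" where
  "RA_opt_operator f l g \<gamma> V x = (1 - \<gamma>) * min (l x) (g x)
      + \<gamma> * min (max (Max (range (\<lambda>u. V (f x u)))) (l x)) (g x)"

lemma blackwell_contraction_RA_policy_operator:
  fixes f :: "'x \<Rightarrow> 'u \<Rightarrow> 'x"
  assumes "0 \<le> \<gamma>"
  shows "blackwell_contraction \<gamma> (RA_policy_operator f l g \<gamma> \<pi>)"
  unfolding blackwell_contraction_def
proof (intro allI impI)
  fix v w :: "'x \<Rightarrow> real" and M x
  assume "0 \<le> M" and vw: "\<forall>y. v y \<le> w y + M"
  let ?E = "\<lambda>V :: 'x \<Rightarrow> real. measure_pmf.expectation (\<pi> x) (\<lambda>u. min (max (V (f x u)) (l x)) (g x))"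
  have "?E v \<le> measure_pmf.expectation (\<pi> x) (\<lambda>u. min (max (w (f x u)) (l x)) (g x) + M)"
    using \<open>0 \<le> M\<close> vw
    by (intro integral_mono) (auto intro: integrable_min_max_pmf min_max_le_shift)
  also have "\<dots> = ?E w + M"
    by (subst Bochner_Integration.integral_add) (auto simp: integrable_min_max_pmf)
  finally have "\<gamma> * ?E v \<le> \<gamma> * (?E w + M)"
    by (rule mult_left_mono[OF _ assms])
  then show "RA_policy_operator f l g \<gamma> \<pi> v x \<le> RA_policy_operator f l g \<gamma> \<pi> w x + \<gamma> * M"
    by (simp add: RA_policy_operator_def algebra_simps)
qed

lemma blackwell_contraction_RA_opt_operator:
  fixes f :: "'x \<Rightarrow> 'u::finite \<Rightarrow> 'x"
  assumes "0 \<le> \<gamma>"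
  shows "blackwell_contraction \<gamma> (RA_opt_operator f l g \<gamma>)"
  unfolding blackwell_contraction_def
proof (intro allI impI)
  fix v w :: "'x \<Rightarrow> real" and M x
  assume "0 \<le> M" and vw: "\<forall>y. v y \<le> w y + M"
  let ?m = "\<lambda>V :: 'x \<Rightarrow> real. Max (range (\<lambda>u. V (f x u)))"
  have "v (f x u) \<le> ?m w + M" for u
  proof -
    have "w (f x u) \<le> ?m w" by (rule Max_ge) auto
    then show ?thesis using vw by (metis add_right_mono order_trans)
  qed
  then have "?m v \<le> ?m w + M"
    by (subst Max_le_iff) auto
  then have "\<gamma> * min (max (?m v) (l x)) (g x) \<le> \<gamma> * (min (max (?m w) (l x)) (g x) + M)"
    using \<open>0 \<le> M\<close> by (intro mult_left_mono[OF _ assms] min_max_le_shift)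
  then show "RA_opt_operator f l g \<gamma> v x \<le> RA_opt_operator f l g \<gamma> w x + \<gamma> * M"
    by (simp add: RA_opt_operator_def algebra_simps)
qed

lemma RA_policy_operator_le_opt_operator:
  fixes f :: "'x \<Rightarrow> 'u::finite \<Rightarrow> 'x"
  assumes "0 \<le> \<gamma>"
  shows "RA_policy_operator f l g \<gamma> \<pi> V x \<le> RA_opt_operator f l g \<gamma> V x"
proof -
  have "measure_pmf.expectation (\<pi> x) (\<lambda>u. min (max (V (f x u)) (l x)) (g x))
      \<le> min (max (Max (range (\<lambda>u. V (f x u)))) (l x)) (g x)"
    by (intro measure_pmf.integral_le_const integrable_min_max_pmf AE_I2 min.mono max.mono Max_ge)
      auto
  then show ?thesis
    using mult_left_mono[OF _ assms] by (simp add: RA_policy_operator_def RA_opt_operator_def)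
qed

lemma RA_policy_operator_greedy:
  fixes f :: "'x \<Rightarrow> 'u::finite \<Rightarrow> 'x"
  assumes "\<And>x. V (f x (a x)) = Max (range (\<lambda>u. V (f x u)))"
  shows "RA_policy_operator f l g \<gamma> (\<lambda>x. return_pmf (a x)) V = RA_opt_operator f l g \<gamma> V"
  by (simp add: fun_eq_iff RA_policy_operator_def RA_opt_operator_def assms)

lemma RA_policy_value_eq_iff:
  fixes f :: "'x::finite \<Rightarrow> 'u \<Rightarrow> 'x"
  assumes "0 \<le> \<gamma>" "\<gamma> < 1"
  shows "RA_policy_value f l g \<gamma> \<pi> = V \<longleftrightarrow> RA_policy_operator f l g \<gamma> \<pi> V = V"
proof -
  have "RA_policy_operator f l g \<gamma> \<pi> W = W \<longleftrightarrow> (\<forall>x. W x = (1 - \<gamma>) * min (l x) (g x)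
      + \<gamma> * measure_pmf.expectation (\<pi> x) (\<lambda>u. min (max (W (f x u)) (l x)) (g x)))" for W
    unfolding fun_eq_iff RA_policy_operator_def by (rule iff_allI) (rule eq_commute)
  then have "RA_policy_value f l g \<gamma> \<pi> = (THE W. RA_policy_operator f l g \<gamma> \<pi> W = W)"
    by (simp add: RA_policy_value_def)
  moreover have "\<exists>!W. RA_policy_operator f l g \<gamma> \<pi> W = W"
    using blackwell_contraction_RA_policy_operator[OF assms(1)]
    by (rule blackwell_contraction_ex1_fixpoint[OF assms(2)])
  ultimately show ?thesis
    by (simp add: The_eq_iff)
qed

lemma RA_opt_value_eq_iff:
  fixes f :: "'x::finite \<Rightarrow> 'u::finite \<Rightarrow> 'x"
  assumes "0 \<le> \<gamma>" "\<gamma> < 1"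
  shows "RA_opt_value f l g \<gamma> = V \<longleftrightarrow> RA_opt_operator f l g \<gamma> V = V"
proof -
  have "RA_opt_operator f l g \<gamma> W = W \<longleftrightarrow> (\<forall>x. W x = (1 - \<gamma>) * min (l x) (g x)
      + \<gamma> * min (max (Max (range (\<lambda>u. W (f x u)))) (l x)) (g x))" for W
    unfolding fun_eq_iff RA_opt_operator_def by (rule iff_allI) (rule eq_commute)
  then have "RA_opt_value f l g \<gamma> = (THE W. RA_opt_operator f l g \<gamma> W = W)"
    by (simp add: RA_opt_value_def)
  moreover have "\<exists>!W. RA_opt_operator f l g \<gamma> W = W"
    using blackwell_contraction_RA_opt_operator[OF assms(1)]
    by (rule blackwell_contraction_ex1_fixpoint[OF assms(2)])
  ultimately show ?thesis
    by (simp add: The_eq_iff)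
qed

lemma RA_policy_value_le_opt_value:
  fixes f :: "'x::finite \<Rightarrow> 'u::finite \<Rightarrow> 'x"
  assumes "0 \<le> \<gamma>" "\<gamma> < 1"
  shows "RA_policy_value f l g \<gamma> \<pi> x \<le> RA_opt_value f l g \<gamma> x"
proof (rule blackwell_contraction_le_fixpoint[OF assms(2)],
    rule blackwell_contraction_RA_opt_operator[OF assms(1)])
  let ?W = "RA_policy_value f l g \<gamma> \<pi>"
  fix y
  have "RA_policy_operator f l g \<gamma> \<pi> ?W = ?W"
    using RA_policy_value_eq_iff[OF assms] by blast
  then have "?W y = RA_policy_operator f l g \<gamma> \<pi> ?W y"
    by simp
  also have "\<dots> \<le> RA_opt_operator f l g \<gamma> ?W y"
    by (rule RA_policy_operator_le_opt_operator[OF assms(1)])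
  finally show "?W y \<le> RA_opt_operator f l g \<gamma> ?W y" .
next
  show "RA_opt_operator f l g \<gamma> (RA_opt_value f l g \<gamma>) = RA_opt_value f l g \<gamma>"
    using RA_opt_value_eq_iff[OF assms] by blast
qed

lemma RA_policy_value_greedy_eq_opt_value:
  fixes f :: "'x::finite \<Rightarrow> 'u::finite \<Rightarrow> 'x"
  assumes "0 \<le> \<gamma>" "\<gamma> < 1"
    and greedy: "\<And>x. RA_opt_value f l g \<gamma> (f x (a x))
                        = Max (range (\<lambda>u. RA_opt_value f l g \<gamma> (f x u)))"
  shows "RA_policy_value f l g \<gamma> (\<lambda>x. return_pmf (a x)) = RA_opt_value f l g \<gamma>"
proof -
  have "RA_opt_operator f l g \<gamma> (RA_opt_value f l g \<gamma>) = RA_opt_value f l g \<gamma>"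
    using RA_opt_value_eq_iff[OF assms(1,2)] by blast
  then have "RA_policy_operator f l g \<gamma> (\<lambda>x. return_pmf (a x)) (RA_opt_value f l g \<gamma>)
      = RA_opt_value f l g \<gamma>"
    by (simp add: RA_policy_operator_greedy[where V = "RA_opt_value f l g \<gamma>", OF greedy])
  then show ?thesis
    using RA_policy_value_eq_iff[OF assms(1,2)] by blast
qed

theorem mainTheorem17:
  fixes f :: "'x::finite \<Rightarrow> 'u::finite \<Rightarrow> 'x"
    and l g :: "'x \<Rightarrow> real"
    and \<gamma> :: real
  assumes "0 < \<gamma>" and "\<gamma> < 1"
  shows "(\<forall>\<pi> :: 'x \<Rightarrow> 'u pmf. \<forall>x. RA_policy_value f l g \<gamma> \<pi> x \<le> RA_opt_value f l g \<gamma> x)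
       \<and> (\<exists>\<pi>star :: 'x \<Rightarrow> 'u pmf. RA_policy_value f l g \<gamma> \<pi>star = RA_opt_value f l g \<gamma>)"
proof -
  have \<gamma>: "0 \<le> \<gamma>" "\<gamma> < 1" using assms by simp_all
  let ?V = "RA_opt_value f l g \<gamma>"
  have "\<exists>u. ?V (f x u) = Max (range (\<lambda>u. ?V (f x u)))" for x
    using Max_range_attained[of "\<lambda>u. ?V (f x u)"] by blast
  then obtain a where "\<And>x. ?V (f x (a x)) = Max (range (\<lambda>u. ?V (f x u)))"
    by metis
  then show ?thesis
    using RA_policy_value_le_opt_value[OF \<gamma>] RA_policy_value_greedy_eq_opt_value[OF \<gamma>] by blast
qed

end
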